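(* With the notation of the context, let $\rho\in C^2(D)$ be positive, $w$ a unit vector, and $C_r,C_b$ constants with $d_r,d_b>0$. If $f_r(t)=f_b(t)$ for some $t\in D$, then $\nu_\rho(t)=x(t)$ and $d_b(t)=d_r(t)$.
   Context: Let $D\subset\mathbb R^2$ be compact and convex with nonempty interior, $x:D\to S^2$ a smooth parametrization of a domain $\Omega=x(D)$ of the upper unit sphere, $n_b>n_r>1$, and $\Phi_\kappa(s)=s-\sqrt{\kappa^2-1+s^2}$. For positive $\rho\in C^2(D)$ let $\nu_\rho(t)$ be the outer unit normal (with $x(t)\cdot\nu_\rho(t)\ge0$) to the surface $\rho(t)x(t)$. For $c\in\{r,b\}$ and a constant $C_c$: $\lambda_c(t)=\Phi_{n_c}(x(t)\cdot\nu_\rho(t))$, $m_c(t)=\frac1{n_c}(x(t)-\lambda_c(t)\nu_\rho(t))$ (a unit vector), $d_c(t)=\dfrac{C_c-\rho(t)(1-w\cdot x(t))}{n_c-w\cdot m_c(t)}$, $f_c(t)=\rho(t)x(t)+d_c(t)m_c(t)$. *)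

theory Defs
  imports "HOL-Analysis.Analysis"
begin

unbundle cross3_syntax

fun Ck_on :: "nat \<Rightarrow> (real^2) set \<Rightarrow> (real^2 \<Rightarrow> 'b::real_normed_vector) \<Rightarrow> bool" where
  "Ck_on 0 U f = continuous_on U f"
| "Ck_on (Suc k) U f = ((\<forall>t\<in>U. f differentiable (at t)) \<and>
      (\<forall>v. Ck_on k U (\<lambda>t. frechet_derivative f (at t) v)))"

definition Ck_set :: "nat \<Rightarrow> (real^2) set \<Rightarrow> (real^2 \<Rightarrow> 'b::real_normed_vector) \<Rightarrow> bool" where
  "Ck_set k D f = (\<exists>U g. open U \<and> D \<subseteq> U \<and> (\<forall>t\<in>D. g t = f t) \<and> Ck_on k U g)"

definition smooth_set :: "(real^2) set \<Rightarrow> (real^2 \<Rightarrow> 'b::real_normed_vector) \<Rightarrow> bool" where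
  "smooth_set D f = (\<forall>k. Ck_set k D f)"

definition pd :: "(real^2) set \<Rightarrow> (real^2 \<Rightarrow> real^3) \<Rightarrow> 2 \<Rightarrow> real^2 \<Rightarrow> real^3" where
  "pd D f i t = frechet_derivative f (at t within D) (axis i 1)"

definition nu :: "(real^2) set \<Rightarrow> (real^2 \<Rightarrow> real) \<Rightarrow> (real^2 \<Rightarrow> real^3) \<Rightarrow> real^2 \<Rightarrow> real^3" where
  "nu D \<rho> x t =
     (let S = (\<lambda>s. \<rho> s *\<^sub>R x s);
          N = pd D S 1 t \<times> pd D S 2 t;
          n = (1 / norm N) *\<^sub>R N
      in if x t \<bullet> n \<ge> 0 then n else - n)"

definition Phi :: "real \<Rightarrow> real \<Rightarrow> real" where
  "Phi \<kappa> s = s - sqrt (\<kappa>\<^sup>2 - 1 + s\<^sup>2)"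

definition lam :: "(real^2) set \<Rightarrow> (real^2 \<Rightarrow> real) \<Rightarrow> (real^2 \<Rightarrow> real^3) \<Rightarrow> real \<Rightarrow> real^2 \<Rightarrow> real" where
  "lam D \<rho> x nc t = Phi nc (x t \<bullet> nu D \<rho> x t)"

definition mvec :: "(real^2) set \<Rightarrow> (real^2 \<Rightarrow> real) \<Rightarrow> (real^2 \<Rightarrow> real^3) \<Rightarrow> real \<Rightarrow> real^2 \<Rightarrow> real^3" where
  "mvec D \<rho> x nc t = (1 / nc) *\<^sub>R (x t - lam D \<rho> x nc t *\<^sub>R nu D \<rho> x t)"

definition dist_c :: "(real^2) set \<Rightarrow> (real^2 \<Rightarrow> real) \<Rightarrow> (real^2 \<Rightarrow> real^3) \<Rightarrow> real^3 \<Rightarrow> real \<Rightarrow> real \<Rightarrow> real^2 \<Rightarrow> real" where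
  "dist_c D \<rho> x w nc Cc t = (Cc - \<rho> t * (1 - w \<bullet> x t)) / (nc - w \<bullet> mvec D \<rho> x nc t)"

definition fmap :: "(real^2) set \<Rightarrow> (real^2 \<Rightarrow> real) \<Rightarrow> (real^2 \<Rightarrow> real^3) \<Rightarrow> real^3 \<Rightarrow> real \<Rightarrow> real \<Rightarrow> real^2 \<Rightarrow> real^3" where
  "fmap D \<rho> x w nc Cc t = \<rho> t *\<^sub>R x t + dist_c D \<rho> x w nc Cc t *\<^sub>R mvec D \<rho> x nc t"

end

theory Submission
  imports Defs
begin

text \<open>Both refracted directions are unit vectors, so \<open>f\<^sub>r(t) = f\<^sub>b(t)\<close>, i.e.
  \<open>d\<^sub>r m\<^sub>r = d\<^sub>b m\<^sub>b\<close>, forces \<open>d\<^sub>r = d\<^sub>b\<close> and \<open>m\<^sub>r = m\<^sub>b\<close>. Expanding \<open>m\<^sub>r = m\<^sub>b\<close> gives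
  \<open>(1/n\<^sub>r - 1/n\<^sub>b) x = (\<lambda>\<^sub>r/n\<^sub>r - \<lambda>\<^sub>b/n\<^sub>b) \<nu>\<close> with \<open>n\<^sub>r \<noteq> n\<^sub>b\<close>, so the unit vectors \<open>x\<close> and \<open>\<nu>\<close>
  are parallel, and \<open>x \<bullet> \<nu> \<ge> 0\<close> makes them equal. The only geometric input is that \<open>\<nu>\<close>
  really is a unit vector: the normal \<open>\<partial>\<^sub>1(\<rho>x) \<times> \<partial>\<^sub>2(\<rho>x)\<close> has \<open>x\<close>-component
  \<open>\<rho>\<^sup>2 x \<bullet> (\<partial>\<^sub>1x \<times> \<partial>\<^sub>2x)\<close>, which is nonzero because \<open>\<partial>\<^sub>1x, \<partial>\<^sub>2x\<close> are independent and tangent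
  to the sphere at \<open>x\<close>.\<close>

lemma has_derivative_unique_within_convex:
  fixes f :: "'a::euclidean_space \<Rightarrow> 'b::real_normed_vector"
  assumes F: "(f has_derivative F) (at t within S)" and G: "(f has_derivative G) (at t within S)"
    and S: "convex S" "t \<in> S" "interior S \<noteq> {}"
  shows "F = G"
proof -
  interpret F: bounded_linear F using F by (rule has_derivative_bounded_linear)
  interpret G: bounded_linear G using G by (rule has_derivative_bounded_linear)
  \<comment> \<open>On each segment from \<open>t\<close> into \<open>S\<close> the one-variable uniqueness applies; the directions
    \<open>y - t\<close> span the whole space because \<open>S\<close> has interior points.\<close>
  have FG_segment: "F (y - t) = G (y - t)" if "y \<in> S" for y
  proof -
    define p where "p = (\<lambda>s::real. t + s *\<^sub>R (y - t))"
    have p: "(p has_derivative (\<lambda>s. s *\<^sub>R (y - t))) (at 0 within cbox 0 1)"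
      unfolding p_def by (auto intro!: derivative_eq_intros)
    have "p ` cbox 0 1 \<subseteq> S"
    proof
      fix z assume "z \<in> p ` cbox 0 1"
      then obtain s where "s \<in> {0..1}" "z = (1 - s) *\<^sub>R t + s *\<^sub>R y"
        by (auto simp: p_def algebra_simps)
      then show "z \<in> S" using S \<open>y \<in> S\<close> by (auto simp: convex_def)
    qed
    then have "(f has_derivative H) (at (p 0) within p ` cbox 0 1)"
      if "(f has_derivative H) (at t within S)" for H
      using that by (auto simp: p_def intro: has_derivative_subset)
    from this[OF F] this[OF G] have "(\<lambda>s. F (s *\<^sub>R (y - t))) = (\<lambda>s. G (s *\<^sub>R (y - t)))"
      using diff_chain_within[OF p] by (intro frechet_derivative_unique_within_closed_interval
          [of 0 1 0 "f \<circ> p"]) (auto simp: o_def)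
    then show ?thesis by (metis scaleR_one)
  qed
  have "affine hull S = (\<lambda>v. t + v) ` span ((\<lambda>y. - t + y) ` S)"
    using S(2) by (intro affine_hull_span_gen) (simp add: hull_inc)
  then have in_span: "v \<in> span ((\<lambda>y. - t + y) ` S)" for v
    using affine_hull_nonempty_interior[OF S(3)] by (metis UNIV_I add_left_imp_eq imageE)
  have "F v - G v = 0" for v
  proof (rule real_vector.linear_eq_0_on_span[OF _ _ in_span])
    show "linear (\<lambda>v. F v - G v)"
      by (rule real_vector.linear_compose_sub[OF F.linear G.linear])
  qed (use FG_segment in auto)
  then show ?thesis by auto
qed

lemma frechet_derivative_within_convex:
  fixes f :: "'a::euclidean_space \<Rightarrow> 'b::real_normed_vector"
  assumes "(f has_derivative F) (at t within S)" "convex S" "t \<in> S" "interior S \<noteq> {}"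
  shows "frechet_derivative f (at t within S) = F"
proof (rule has_derivative_unique_within_convex[OF _ assms])
  show "(f has_derivative frechet_derivative f (at t within S)) (at t within S)"
    using differentiableI[OF assms(1)] frechet_derivative_works by blast
qed

lemma has_derivative_sphere_orthogonal:
  fixes x :: "'a::euclidean_space \<Rightarrow> 'b::real_inner"
  assumes X: "(x has_derivative X) (at t within S)" and sphere: "\<forall>s\<in>S. norm (x s) = 1"
    and S: "convex S" "t \<in> S" "interior S \<noteq> {}"
  shows "x t \<bullet> X v = 0"
proof -
  have "((\<lambda>s. x s \<bullet> x s) has_derivative (\<lambda>v. x t \<bullet> X v + X v \<bullet> x t)) (at t within S)"
    by (rule has_derivative_inner[OF X X])
  then have "((\<lambda>s. 1) has_derivative (\<lambda>v. x t \<bullet> X v + X v \<bullet> x t)) (at t within S)"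
    by (rule has_derivative_transform_within[where d=1]) (use S sphere in \<open>auto simp: norm_eq_1\<close>)
  then have "(\<lambda>v. x t \<bullet> X v + X v \<bullet> x t) = (\<lambda>v. 0)"
    using has_derivative_const S by (rule has_derivative_unique_within_convex)
  then show ?thesis by (simp add: inner_commute fun_eq_iff)
qed

lemma inner_cross_nonzero_of_orthogonal:
  fixes p a b :: "real^3"
  assumes "p \<noteq> 0" "a \<times> b \<noteq> 0" "p \<bullet> a = 0" "p \<bullet> b = 0"
  shows "p \<bullet> (a \<times> b) \<noteq> 0"
proof
  assume "p \<bullet> (a \<times> b) = 0"
  moreover have "p \<times> (a \<times> b) = 0" using assms by (simp add: Lagrange)
  ultimately show False using assms norm_and_cross_eq_0 by blast
qed

lemma cross_basis_image_nonzero: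
  fixes X :: "real^2 \<Rightarrow> real^3"
  assumes "linear X" "inj X"
  shows "X (axis 1 1) \<times> X (axis 2 1) \<noteq> 0"
proof
  assume "X (axis 1 1) \<times> X (axis 2 1) = 0"
  then consider "X (axis 1 1) = 0" | "X (axis 2 1) = 0" | c where "X (axis 2 1) = c *\<^sub>R X (axis 1 1)"
    by (auto simp: cross_eq_0 collinear_lemma)
  then obtain v :: "real^2" where "v \<noteq> 0" "X v = 0"
  proof cases
    case (3 c)
    then have "X (axis 2 1 - c *\<^sub>R axis 1 1) = 0"
      using assms(1) by (simp add: linear_diff linear_cmul)
    moreover have "axis 2 1 - c *\<^sub>R axis 1 1 \<noteq> (0 :: real^2)"
    proof
      assume "axis 2 1 - c *\<^sub>R axis 1 1 = (0 :: real^2)"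
      then have "(axis 2 1 - c *\<^sub>R axis 1 1 :: real^2) $ 2 = 0" by simp
      then show False by (simp add: axis_def)
    qed
    ultimately show ?thesis using that by blast
  qed (metis axis_eq_0_iff zero_neq_one)+
  then show False using assms linear_injective_0 by blast
qed

lemma Ck_set_Suc_differentiable_within:
  assumes "Ck_set (Suc k) D f" "t \<in> D"
  shows "f differentiable (at t within D)"
proof -
  obtain U g where U: "open U" "D \<subseteq> U" "\<forall>s\<in>D. g s = f s" "Ck_on (Suc k) U g"
    using assms(1) unfolding Ck_set_def by blast
  then have "g differentiable (at t)" using assms(2) by (meson Ck_on.simps(2) subsetD)
  then obtain G where "(g has_derivative G) (at t)" by (auto simp: differentiable_def)
  then have "(g has_derivative G) (at t within D)" by (rule has_derivative_at_withinI)
  then have "(f has_derivative G) (at t within D)"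
    by (rule has_derivative_transform_within[where d=1]) (use assms(2) U(3) in auto)
  then show ?thesis by (rule differentiableI)
qed

lemma inner_nu_nonneg: "x t \<bullet> nu D \<rho> x t \<ge> 0"
  by (simp add: nu_def Let_def)

lemma norm_nu:
  fixes x :: "real^2 \<Rightarrow> real^3" and \<rho> :: "real^2 \<Rightarrow> real"
  assumes X: "(x has_derivative X) (at t within D)" and R: "(\<rho> has_derivative R) (at t within D)"
    and D: "convex D" "t \<in> D" "interior D \<noteq> {}"
    and sphere: "\<forall>s\<in>D. norm (x s) = 1" and inj: "inj X" and \<rho>_pos: "\<rho> t > 0"
  shows "norm (nu D \<rho> x t) = 1"
proof -
  interpret X: bounded_linear X using X by (rule has_derivative_bounded_linear)
  define a where "a i = X (axis i 1)" for i
  have "((\<lambda>s. \<rho> s *\<^sub>R x s) has_derivative (\<lambda>v. \<rho> t *\<^sub>R X v + R v *\<^sub>R x t)) (at t within D)"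
    by (rule has_derivative_scaleR[OF R X])
  then have pd: "pd D (\<lambda>s. \<rho> s *\<^sub>R x s) i t = \<rho> t *\<^sub>R a i + R (axis i 1) *\<^sub>R x t" for i
    unfolding pd_def a_def using D by (subst frechet_derivative_within_convex) auto
  define N where "N = pd D (\<lambda>s. \<rho> s *\<^sub>R x s) 1 t \<times> pd D (\<lambda>s. \<rho> s *\<^sub>R x s) 2 t"
  have "x t \<bullet> N = (\<rho> t)\<^sup>2 * (x t \<bullet> (a 1 \<times> a 2))"
    by (simp add: N_def pd cross_add_left cross_add_right cross_mult_left cross_mult_right
        inner_add_right dot_cross_self power2_eq_square)
  moreover have "x t \<bullet> (a 1 \<times> a 2) \<noteq> 0"
  proof (rule inner_cross_nonzero_of_orthogonal)
    show "x t \<noteq> 0" using sphere D(2) by auto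
    show "a 1 \<times> a 2 \<noteq> 0" unfolding a_def by (rule cross_basis_image_nonzero[OF X.linear inj])
  qed (use has_derivative_sphere_orthogonal[OF X sphere D] a_def in auto)
  ultimately have "N \<noteq> 0" using \<rho>_pos by auto
  then show ?thesis by (simp add: nu_def Let_def N_def)
qed

definition refraction_dir :: "real \<Rightarrow> 'a::real_inner \<Rightarrow> 'a \<Rightarrow> 'a" where
  "refraction_dir \<kappa> v \<nu> = (1 / \<kappa>) *\<^sub>R (v - Phi \<kappa> (v \<bullet> \<nu>) *\<^sub>R \<nu>)"

lemma mvec_eq_refraction_dir: "mvec D \<rho> x \<kappa> t = refraction_dir \<kappa> (x t) (nu D \<rho> x t)"
  by (simp add: mvec_def lam_def refraction_dir_def)

lemma norm_refraction_dir:
  fixes v \<nu> :: "'a::real_inner"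
  assumes "norm v = 1" "norm \<nu> = 1" "\<kappa> > 1"
  shows "norm (refraction_dir \<kappa> v \<nu>) = 1"
proof -
  define s where "s = v \<bullet> \<nu>"
  define q where "q = sqrt (\<kappa>\<^sup>2 - 1 + s\<^sup>2)"
  have q2: "q\<^sup>2 = \<kappa>\<^sup>2 - 1 + s\<^sup>2"
    unfolding q_def using assms(3) by (intro real_sqrt_pow2) (simp add: add_nonneg_nonneg)
  have "(norm (v - (s - q) *\<^sub>R \<nu>))\<^sup>2 = 1 - 2 * (s - q) * s + (s - q)\<^sup>2"
    using assms(1,2) unfolding power2_norm_eq_inner
    by (simp add: inner_diff_left inner_diff_right s_def inner_commute norm_eq_1
        power2_eq_square algebra_simps)
  also have "\<dots> = \<kappa>\<^sup>2"
    using q2 by (simp add: power2_eq_square algebra_simps)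
  finally have "norm (v - (s - q) *\<^sub>R \<nu>) = \<kappa>"
    using assms(3) by (simp add: power2_eq_iff_nonneg)
  then show ?thesis
    using assms(3) by (simp add: refraction_dir_def Phi_def s_def q_def)
qed

lemma scaled_refraction_dirs_eq_imp_normal_incidence:
  fixes v \<nu> :: "'a::real_inner"
  assumes unit: "norm v = 1" "norm \<nu> = 1" and acute: "v \<bullet> \<nu> \<ge> 0"
    and n: "1 < n\<^sub>r" "n\<^sub>r < n\<^sub>b" and d: "d\<^sub>r > 0" "d\<^sub>b > 0"
    and eq: "d\<^sub>r *\<^sub>R refraction_dir n\<^sub>r v \<nu> = d\<^sub>b *\<^sub>R refraction_dir n\<^sub>b v \<nu>"
  shows "\<nu> = v \<and> d\<^sub>b = d\<^sub>r"
proof -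
  define \<alpha> where "\<alpha> = 1/n\<^sub>r - 1/n\<^sub>b"
  define \<gamma> where "\<gamma> = Phi n\<^sub>r (v \<bullet> \<nu>) / n\<^sub>r - Phi n\<^sub>b (v \<bullet> \<nu>) / n\<^sub>b"
  have "norm (d\<^sub>r *\<^sub>R refraction_dir n\<^sub>r v \<nu>) = norm (d\<^sub>b *\<^sub>R refraction_dir n\<^sub>b v \<nu>)"
    using eq by simp
  then have d_eq: "d\<^sub>b = d\<^sub>r"
    using d n unit by (simp add: norm_refraction_dir)
  with eq d have "refraction_dir n\<^sub>r v \<nu> = refraction_dir n\<^sub>b v \<nu>" by simp
  then have "\<alpha> *\<^sub>R v = \<gamma> *\<^sub>R \<nu>"
    by (simp add: \<alpha>_def \<gamma>_def refraction_dir_def scaleR_diff_left scaleR_diff_right algebra_simps)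
  moreover have "\<alpha> \<noteq> 0" using n by (simp add: \<alpha>_def frac_less2)
  ultimately have parallel: "v = (\<gamma> / \<alpha>) *\<^sub>R \<nu>"
    by (simp add: eq_vector_fraction_iff)
  have "\<bar>\<gamma> / \<alpha>\<bar> = 1" and "v \<bullet> \<nu> = \<gamma> / \<alpha>"
    using unit by (auto simp: parallel norm_eq_1)
  then have "v = \<nu>" using acute parallel by (simp add: abs_if split: if_splits)
  then show ?thesis using d_eq by simp
qed

theorem lemma5p1:
  fixes D :: "(real^2) set" and x :: "real^2 \<Rightarrow> real^3" and \<rho> :: "real^2 \<Rightarrow> real"
    and w :: "real^3" and n_r n_b C_r C_b :: real and t :: "real^2"
  assumes D: "compact D" "convex D" "interior D \<noteq> {}"
    and x_sphere: "\<forall>s\<in>D. norm (x s) = 1 \<and> x s $ 3 > 0"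
    and x_smooth: "smooth_set D x"
    and x_inj: "inj_on x D"
    and x_regular: "\<forall>s\<in>D. inj (frechet_derivative x (at s within D))"
    and n: "n_b > n_r" "n_r > 1"
    and \<rho>_C2: "Ck_set 2 D \<rho>" and \<rho>_pos: "\<forall>s\<in>D. \<rho> s > 0"
    and w: "norm w = 1"
    and d_pos: "\<forall>s\<in>D. dist_c D \<rho> x w n_r C_r s > 0 \<and> dist_c D \<rho> x w n_b C_b s > 0"
    and t: "t \<in> D"
    and eq: "fmap D \<rho> x w n_r C_r t = fmap D \<rho> x w n_b C_b t"
  shows "nu D \<rho> x t = x t \<and> dist_c D \<rho> x w n_b C_b t = dist_c D \<rho> x w n_r C_r t"
proof (rule scaled_refraction_dirs_eq_imp_normal_incidence)
  have "x differentiable (at t within D)"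
    using x_smooth t unfolding smooth_set_def by (intro Ck_set_Suc_differentiable_within[of 0]) auto
  then have X: "(x has_derivative frechet_derivative x (at t within D)) (at t within D)"
    by (simp add: frechet_derivative_works)
  have "\<rho> differentiable (at t within D)"
    using \<rho>_C2 t by (intro Ck_set_Suc_differentiable_within[of 1]) (simp add: numeral_2_eq_2)
  then have R: "(\<rho> has_derivative frechet_derivative \<rho> (at t within D)) (at t within D)"
    by (simp add: frechet_derivative_works)
  show "norm (nu D \<rho> x t) = 1"
    using norm_nu[OF X R D(2) t D(3)] x_sphere x_regular \<rho>_pos t by auto
  show "dist_c D \<rho> x w n_r C_r t *\<^sub>R refraction_dir n_r (x t) (nu D \<rho> x t)
      = dist_c D \<rho> x w n_b C_b t *\<^sub>R refraction_dir n_b (x t) (nu D \<rho> x t)"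
    using eq by (simp add: fmap_def mvec_eq_refraction_dir)
qed (use x_sphere t n d_pos inner_nu_nonneg in auto)

end
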